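(* Let $T>0$, $0<\eta<T$, $0<\alpha <\frac{2T}{\eta ^{2}}$ and $0\leq \beta < \frac{2T-\alpha \eta ^{2}}{\alpha \eta ^{2}-2\eta +2T}$. If $y\in C([0,T],[0,\infty))$, then the unique solution $u$ of \[ u''(t)+y(t)=0,\ t\in(0,T),\qquad u(0)=\beta u(\eta),\quad u(T)=\alpha\int_0^\eta u(s)\,ds \] satisfies $u(t)\geq 0$ for all $t\in [0,T]$.
   Context: A solution is a function $u\in C^2([0,T])$ satisfying the differential equation on $(0,T)$ and the two boundary conditions; under the stated hypotheses this problem has a unique solution. *)

theory Defs
  imports "HOL-Analysis.Analysis"
begin

definition C2_on_with :: "real \<Rightarrow> real \<Rightarrow> (real \<Rightarrow> real) \<Rightarrow> (real \<Rightarrow> real) \<Rightarrow> (real \<Rightarrow> real) \<Rightarrow> bool" where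
  "C2_on_with a b u u' u'' \<longleftrightarrow>
     (\<forall>t\<in>{a..b}. (u has_real_derivative u' t) (at t within {a..b})) \<and>
     (\<forall>t\<in>{a..b}. (u' has_real_derivative u'' t) (at t within {a..b})) \<and>
     continuous_on {a..b} u''"

end

theory Submission
  imports Defs
begin

text \<open>Since \<open>u'' = -y \<le> 0\<close>, the solution is concave and hence lies above its chord
  \<open>((T - t) u(0) + t u(T)) / T\<close>. Evaluating this bound at \<open>\<eta>\<close> and integrating it over
  \<open>[0, \<eta>]\<close> turns the two boundary conditions into two linear inequalities for \<open>u(0)\<close> and
  \<open>u(T)\<close>; the restrictions on \<open>\<alpha>\<close> and \<open>\<beta>\<close> are exactly what forces both values to be
  nonnegative, and then so is the chord.\<close>

lemma has_real_derivative_mean_value: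
  fixes f f' :: "real \<Rightarrow> real"
  assumes deriv: "\<And>t. t \<in> {a..b} \<Longrightarrow> (f has_real_derivative f' t) (at t within {a..b})"
    and "a \<le> c" "c < d" "d \<le> b"
  shows "\<exists>z\<in>{c<..<d}. f d - f c = f' z * (d - c)"
proof (rule mvt_simple[OF \<open>c < d\<close>, where f'="\<lambda>t h. f' t * h"])
  fix t assume "c \<le> t" "t \<le> d"
  with assms have "(f has_real_derivative f' t) (at t within {c..d})"
    by (intro DERIV_subset[OF deriv]) auto
  then show "(f has_derivative (\<lambda>h. f' t * h)) (at t within {c..d})"
    by (simp add: has_field_derivative_def)
qed

lemma C2_on_with_derivative_antitone:
  assumes "C2_on_with a b u u' u''" and concave: "\<forall>t\<in>{a<..<b}. u'' t \<le> 0"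
    and "a \<le> r" "r \<le> s" "s \<le> b"
  shows "u' s \<le> u' r"
proof (cases "r = s")
  case False
  then obtain z where z: "z \<in> {r<..<s}" "u' s - u' r = u'' z * (s - r)"
    using has_real_derivative_mean_value[of a b u' u'' r s] assms
    unfolding C2_on_with_def by auto
  with assms have "u'' z * (s - r) \<le> 0"
    by (intro mult_nonpos_nonneg) auto
  with z show ?thesis by simp
qed simp

lemma C2_on_with_above_chord:
  assumes C2: "C2_on_with a b u u' u''" and concave: "\<forall>t\<in>{a<..<b}. u'' t \<le> 0"
    and "a \<le> t" "t \<le> b"
  shows "u a * (b - t) + u b * (t - a) \<le> u t * (b - a)"
proof (cases "a < t \<and> t < b")
  case True
  have deriv: "\<And>t. t \<in> {a..b} \<Longrightarrow> (u has_real_derivative u' t) (at t within {a..b})"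
    using C2 unfolding C2_on_with_def by blast
  obtain z1 where z1: "z1 \<in> {a<..<t}" "u t - u a = u' z1 * (t - a)"
    using has_real_derivative_mean_value[of a b u u' a t] deriv True by auto
  obtain z2 where z2: "z2 \<in> {t<..<b}" "u b - u t = u' z2 * (b - t)"
    using has_real_derivative_mean_value[of a b u u' t b] deriv True by auto
  have "u' z2 \<le> u' z1"
    using C2_on_with_derivative_antitone[OF C2 concave] z1 z2 by auto
  then have "(u b - u t) * (t - a) \<le> (u t - u a) * (b - t)"
    using z1 z2 True by (simp add: mult_right_mono mult.commute mult.left_commute)
  then show ?thesis by (simp add: algebra_simps)
next
  case False
  with assms have "t = a \<or> t = b" by auto
  then show ?thesis by (auto simp: algebra_simps)
qed

lemma affine_interpolant_has_integral:
  fixes p q T \<eta> :: real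
  assumes "T \<noteq> 0" "0 \<le> \<eta>"
  shows "((\<lambda>t. (p * (T - t) + q * t) / T) has_integral p * \<eta> + (q - p) * \<eta>\<^sup>2 / (2 * T)) {0..\<eta>}"
proof -
  have "((\<lambda>t. (p * (T - t) + q * t) / T) has_integral
      (\<lambda>t. p * t + (q - p) * t\<^sup>2 / (2 * T)) \<eta> - (\<lambda>t. p * t + (q - p) * t\<^sup>2 / (2 * T)) 0) {0..\<eta>}"
    using assms
    by (intro fundamental_theorem_of_calculus)
       (auto intro!: derivative_eq_intros simp flip: has_real_derivative_iff_has_vector_derivative
             simp: field_simps)
  then show ?thesis by simp
qed

lemma C2_on_with_integral_ge_chord:
  assumes C2: "C2_on_with 0 T u u' u''" and concave: "\<forall>t\<in>{0<..<T}. u'' t \<le> 0"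
    and "0 < T" "0 \<le> \<eta>" "\<eta> \<le> T"
  shows "u 0 * \<eta> + (u T - u 0) * \<eta>\<^sup>2 / (2 * T) \<le> integral {0..\<eta>} u"
proof -
  have "continuous_on {0..T} u"
    using C2 DERIV_continuous_on unfolding C2_on_with_def by blast
  then have "continuous_on {0..\<eta>} u"
    by (rule continuous_on_subset) (use assms in auto)
  then have integral_u: "(u has_integral integral {0..\<eta>} u) {0..\<eta>}"
    using integrable_continuous_interval by blast
  have integral_chord: "((\<lambda>t. (u 0 * (T - t) + u T * t) / T) has_integral
      u 0 * \<eta> + (u T - u 0) * \<eta>\<^sup>2 / (2 * T)) {0..\<eta>}"
    using assms by (intro affine_interpolant_has_integral) auto
  show ?thesis
  proof (rule has_integral_le[OF integral_chord integral_u])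
    fix t assume "t \<in> {0..\<eta>}"
    with assms C2_on_with_above_chord[OF C2 concave, of t]
    have "u 0 * (T - t) + u T * t \<le> u t * T" by simp
    with \<open>0 < T\<close> show "(u 0 * (T - t) + u T * t) / T \<le> u t" by (simp add: divide_le_eq)
  qed
qed

lemma nonneg_of_boundary_inequalities:
  fixes T \<eta> \<alpha> \<beta> p q :: real
  assumes "0 < \<eta>" "\<eta> < T" "0 < \<alpha>" "\<alpha> < 2 * T / \<eta>\<^sup>2"
    and "0 \<le> \<beta>" "\<beta> < (2 * T - \<alpha> * \<eta>\<^sup>2) / (\<alpha> * \<eta>\<^sup>2 - 2 * \<eta> + 2 * T)"
    and left: "\<beta> * (p * (T - \<eta>) + q * \<eta>) \<le> p * T"
    and right: "\<alpha> * p * (2 * T * \<eta> - \<eta>\<^sup>2) \<le> q * (2 * T - \<alpha> * \<eta>\<^sup>2)"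
  shows "0 \<le> p \<and> 0 \<le> q"
proof -
  have alpha_slack: "0 < 2 * T - \<alpha> * \<eta>\<^sup>2"
    using assms(1,4) by (simp add: less_divide_eq)
  have "0 < \<alpha> * \<eta>\<^sup>2"
    using assms(1,3) by simp
  then have beta_denominator_pos: "0 < \<alpha> * \<eta>\<^sup>2 - 2 * \<eta> + 2 * T"
    using assms(2) by linarith
  have "\<beta> * (\<alpha> * \<eta>\<^sup>2 - 2 * \<eta> + 2 * T) < 2 * T - \<alpha> * \<eta>\<^sup>2"
    using assms(6) beta_denominator_pos by (simp add: less_divide_eq)
  then have "T * (\<beta> * (\<alpha> * \<eta>\<^sup>2 - 2 * \<eta> + 2 * T)) < T * (2 * T - \<alpha> * \<eta>\<^sup>2)"
    using assms(1,2) by simp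
  then have coeff: "0 < T * (2 * T - \<alpha> * \<eta>\<^sup>2) - \<beta> * T * (\<alpha> * \<eta>\<^sup>2 - 2 * \<eta> + 2 * T)"
    by (simp add: algebra_simps)
  have p: "0 \<le> p"
  proof (rule ccontr)
    \<comment> \<open>\<open>\<beta> \<eta>\<close> times \<open>right\<close> plus \<open>2T - \<alpha> \<eta>\<^sup>2\<close> times \<open>left\<close> eliminates \<open>q\<close>.\<close>
    assume "\<not> 0 \<le> p"
    have "\<beta> * \<eta> * (\<alpha> * p * (2 * T * \<eta> - \<eta>\<^sup>2)) \<le> \<beta> * \<eta> * (q * (2 * T - \<alpha> * \<eta>\<^sup>2))"
      using right assms(1,5) by (intro mult_left_mono) auto
    moreover have "(2 * T - \<alpha> * \<eta>\<^sup>2) * (\<beta> * (p * (T - \<eta>) + q * \<eta>)) \<le> (2 * T - \<alpha> * \<eta>\<^sup>2) * (p * T)"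
      using left alpha_slack by (intro mult_left_mono) auto
    ultimately have "0 \<le> p * (T * (2 * T - \<alpha> * \<eta>\<^sup>2) - \<beta> * T * (\<alpha> * \<eta>\<^sup>2 - 2 * \<eta> + 2 * T))"
      by (simp add: algebra_simps power2_eq_square)
    with coeff \<open>\<not> 0 \<le> p\<close> show False by (simp add: zero_le_mult_iff)
  qed
  have "\<eta> * \<eta> < 2 * T * \<eta>"
    using assms(1,2) by (intro mult_strict_right_mono) auto
  with p assms(3) have "0 \<le> \<alpha> * p * (2 * T * \<eta> - \<eta>\<^sup>2)"
    by (simp add: power2_eq_square)
  with right have "0 \<le> q * (2 * T - \<alpha> * \<eta>\<^sup>2)"
    by linarith
  with alpha_slack have "0 \<le> q"
    by (simp add: zero_le_mult_iff)
  with p show ?thesis ..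
qed

lemma boundary_values_nonneg:
  fixes T \<eta> \<alpha> \<beta> p q v I :: real
  assumes "0 < \<eta>" "\<eta> < T" "0 < \<alpha>" "\<alpha> < 2 * T / \<eta>\<^sup>2"
    and "0 \<le> \<beta>" "\<beta> < (2 * T - \<alpha> * \<eta>\<^sup>2) / (\<alpha> * \<eta>\<^sup>2 - 2 * \<eta> + 2 * T)"
    and "p = \<beta> * v" "p * (T - \<eta>) + q * \<eta> \<le> v * T"
    and "q = \<alpha> * I" "p * \<eta> + (q - p) * \<eta>\<^sup>2 / (2 * T) \<le> I"
  shows "0 \<le> p \<and> 0 \<le> q"
proof (rule nonneg_of_boundary_inequalities[OF assms(1-6)])
  have "\<beta> * (p * (T - \<eta>) + q * \<eta>) \<le> \<beta> * (v * T)"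
    using assms(5,8) by (rule mult_left_mono[rotated])
  with assms(7) show "\<beta> * (p * (T - \<eta>) + q * \<eta>) \<le> p * T" by simp
  have "2 * T * (\<alpha> * (p * \<eta> + (q - p) * \<eta>\<^sup>2 / (2 * T))) \<le> 2 * T * q"
    using assms(1-3,9,10) by (intro mult_left_mono) auto
  moreover have "2 * T * (\<alpha> * (p * \<eta> + (q - p) * \<eta>\<^sup>2 / (2 * T)))
      = \<alpha> * (2 * T * p * \<eta> + (q - p) * \<eta>\<^sup>2)"
    using assms(1,2) by (simp add: field_simps)
  ultimately show "\<alpha> * p * (2 * T * \<eta> - \<eta>\<^sup>2) \<le> q * (2 * T - \<alpha> * \<eta>\<^sup>2)"
    by (simp add: algebra_simps)
qed

theorem lemma2p2:
  fixes T \<eta> \<alpha> \<beta> :: real and y u u' u'' :: "real \<Rightarrow> real"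
  assumes "T > 0" and "0 < \<eta>" and "\<eta> < T"
    and "0 < \<alpha>" and "\<alpha> < 2 * T / \<eta>^2"
    and "0 \<le> \<beta>" and "\<beta> < (2 * T - \<alpha> * \<eta>^2) / (\<alpha> * \<eta>^2 - 2 * \<eta> + 2 * T)"
    and "continuous_on {0..T} y" and "\<forall>t\<in>{0..T}. y t \<ge> 0"
    and "C2_on_with 0 T u u' u''"
    and "\<forall>t\<in>{0<..<T}. u'' t + y t = 0"
    and "u 0 = \<beta> * u \<eta>"
    and "u T = \<alpha> * integral {0..\<eta>} u"
  shows "\<forall>t\<in>{0..T}. u t \<ge> 0"
proof -
  have concave: "\<forall>t\<in>{0<..<T}. u'' t \<le> 0"
    using assms(9,11) by (fastforce simp: add_eq_0_iff2)
  have chord: "u 0 * (T - t) + u T * t \<le> u t * T" if "t \<in> {0..T}" for t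
    using C2_on_with_above_chord[OF assms(10) concave] that by simp
  have "0 \<le> u 0 \<and> 0 \<le> u T"
  proof (rule boundary_values_nonneg[OF assms(2-7,12) _ assms(13)])
    show "u 0 * (T - \<eta>) + u T * \<eta> \<le> u \<eta> * T"
      using chord assms(2,3) by simp
    show "u 0 * \<eta> + (u T - u 0) * \<eta>\<^sup>2 / (2 * T) \<le> integral {0..\<eta>} u"
      using C2_on_with_integral_ge_chord[OF assms(10) concave] assms(1-3) by simp
  qed
  show ?thesis
  proof
    fix t assume t: "t \<in> {0..T}"
    with \<open>0 \<le> u 0 \<and> 0 \<le> u T\<close> have "0 \<le> u 0 * (T - t) + u T * t" by simp
    with chord[OF t] have "0 \<le> u t * T" by linarith
    with assms(1) show "0 \<le> u t" by (simp add: zero_le_mult_iff)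
  qed
qed

end
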